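(* Let $w$ be a standard Gaussian real random variable and $T\in\mathbb{N}^*$. There exists a constant $C_T>0$ depending only on $T$ such that for all $\mathbf{a}\in\mathbb{R}^{T+1}$ and all $t>0$, \[\frac1{C_T}\exp(-C_T\eta(t))\le\mathbb{P}\big(|f^2(\mathbf{a},w)-\mathbb{E}f^2(\mathbf{a},w)|\ge t\big)\le C_T\exp\Big(-\frac1{C_T}\eta(t)\Big),\] where \[\eta(t)=\min_{1\le p\le k\le 2T}\left(\frac{t}{\left|\mathbb{E}\frac{\partial^k (f^2)}{\partial w^k}(\mathbf{a},w)\right|}\right)^{2/p}.\]
   Context: $f(\mathbf{a},w)=\sum_{t=0}^Ta_{T-t}w^t$ for $\mathbf{a}=(a_t)_{0\le t\le T}$, and $f^2(\mathbf{a},w)=f(\mathbf{a},w)^2$, viewed as a polynomial in $w$ of degree at most $2T$. A term with vanishing denominator is interpreted as $+\infty$. *)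

theory Defs
  imports "HOL-Probability.Probability"
begin

text \<open>f(a,w) = sum_{t=0}^T a_{T-t} w^t, coefficients a_0..a_T (other indices irrelevant).\<close>
definition fpol :: "nat \<Rightarrow> (nat \<Rightarrow> real) \<Rightarrow> real \<Rightarrow> real" where
  "fpol T a w = (\<Sum>t=0..T. a (T - t) * w ^ t)"

definition fsq :: "nat \<Rightarrow> (nat \<Rightarrow> real) \<Rightarrow> real \<Rightarrow> real" where
  "fsq T a w = (fpol T a w)^2"

definition gauss :: "real measure" where
  "gauss = density lborel std_normal_density"

definition Ederiv :: "nat \<Rightarrow> (nat \<Rightarrow> real) \<Rightarrow> nat \<Rightarrow> real" where
  "Ederiv T a k = integral\<^sup>L gauss ((deriv ^^ k) (fsq T a))"

definition eta :: "nat \<Rightarrow> (nat \<Rightarrow> real) \<Rightarrow> real \<Rightarrow> ereal" where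
  "eta T a t = Min ((\<lambda>(p,k). if Ederiv T a k = 0 then \<infinity>
                     else ereal ((t / \<bar>Ederiv T a k\<bar>) powr (2 / real p)))
                   ` {(p,k). 1 \<le> p \<and> p \<le> k \<and> k \<le> 2*T})"

definition exp_neg :: "real \<Rightarrow> ereal \<Rightarrow> real" where
  "exp_neg c e = (if e = \<infinity> then 0 else exp (- c * real_of_ereal e))"

end

theory Submission
  imports Defs "HOL-Computational_Algebra.Polynomial"
begin

text \<open>
  Let Q = f^2 - E f^2, a polynomial of degree d = 2T with Gaussian mean zero and coefficients
  q_m, and let c_k = E Q^(k)(w), which for k \<ge> 1 are the quantities in \<open>\<eta>\<close>. Expanding in Gaussian
  moments gives c_k = k! q_k + (terms in q_(k+1), ..., q_d), a triangular system, so for s \<ge> 1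
  the profiles V(s) = \<open>\<Sum>\<close>_k |c_k| s^k and S(s) = \<open>\<Sum>\<close>_(m \<ge> 1) |q_m| s^m (deriv_profile and
  coeff_profile below) agree up to constants depending only on d; the mean-zero condition bounds q_0 by S(s) as well.

  If V(s) is a small multiple of t, then |Q| < t on [-s, s] and the event |Q(w)| \<ge> t lies in the
  Gaussian tail |w| > s. If t \<le> V(s), then S(s) is large; a polynomial of degree d bounded at
  d + 1 equally spaced nodes has bounded coefficients, so Q is large at one of the nodes
  \<open>\<lambda>\<close> s j (j = 0, ..., d, with \<open>\<lambda>\<close> = node_spacing), and by the bound on Q' it stays above t
  on an interval of fixed length next to that node, whose Gaussian mass is exp(-O(s^2)). Taking s^2 = \<open>\<eta>\<close>(t), which
  means |c_k| s^p \<le> t for all p \<le> k with equality for some pair, gives both bounds.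
\<close>

section \<open>The standard Gaussian measure\<close>

lemma prob_space_gauss: "prob_space gauss"
  unfolding gauss_def using prob_space_normal_density[of 1 0] by simp

interpretation gauss: prob_space gauss
  by (rule prob_space_gauss)

lemma sets_gauss [simp, measurable_cong]: "sets gauss = sets borel"
  unfolding gauss_def by simp

lemma integrable_gauss_power: "integrable gauss (\<lambda>x. x ^ n)"
  unfolding gauss_def
  by (subst integrable_density) (auto simp: integrable_std_normal_moment)

lemma integrable_gauss_poly: "integrable gauss (poly p)"
  unfolding poly_altdef
  by (intro Bochner_Integration.integrable_sum integrable_mult_right integrable_gauss_power)

definition gauss_moment :: "nat \<Rightarrow> real" where
  "gauss_moment n = (\<integral>x. x ^ n \<partial>gauss)"

lemma gauss_moment_0 [simp]: "gauss_moment 0 = 1"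
  unfolding gauss_moment_def using gauss.prob_space by simp

lemma integral_gauss_poly:
  assumes "degree p \<le> D"
  shows "(\<integral>x. poly p x \<partial>gauss) = (\<Sum>i\<le>D. coeff p i * gauss_moment i)"
proof -
  have "poly p x = (\<Sum>i\<le>D. coeff p i * x ^ i)" for x
    unfolding poly_altdef using assms
    by (intro sum.mono_neutral_left) (auto simp: coeff_eq_0)
  then show ?thesis
    by (simp add: Bochner_Integration.integral_sum integrable_mult_right integrable_gauss_power
        gauss_moment_def)
qed

lemma measure_gauss_abs_gt_le:
  assumes "0 \<le> r"
  shows "measure gauss {w. r < \<bar>w\<bar>} \<le> sqrt 2 * exp (- (r\<^sup>2) / 4)"
proof -
  have "ennreal (std_normal_density x) * indicator {w. r < \<bar>w\<bar>} x
          \<le> ennreal (sqrt 2 * exp (- (r\<^sup>2) / 4)) * ennreal (normal_density 0 (sqrt 2) x)" for x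
  proof (cases "r < \<bar>x\<bar>")
    case True
    then have "r\<^sup>2 \<le> x\<^sup>2"
      using assms by (metis abs_le_square_iff abs_of_nonneg less_imp_le)
    then have "exp (- (x\<^sup>2) / 2) \<le> exp (- (r\<^sup>2) / 4) * exp (- (x\<^sup>2) / 4)"
      by (subst mult_exp_exp) simp
    then have "std_normal_density x \<le> 1 / sqrt (2 * pi) * (exp (- (r\<^sup>2) / 4) * exp (- (x\<^sup>2) / 4))"
      by (simp add: std_normal_density_def divide_right_mono)
    also have "\<dots> = sqrt 2 * exp (- (r\<^sup>2) / 4) * normal_density 0 (sqrt 2) x"
      by (simp add: normal_density_def real_sqrt_mult field_simps)
    finally have "std_normal_density x \<le> \<dots>" .
    then show ?thesis
      using True by (simp add: ennreal_mult[symmetric])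
  qed simp
  then have "emeasure gauss {w. r < \<bar>w\<bar>}
      \<le> (\<integral>\<^sup>+x. ennreal (sqrt 2 * exp (- (r\<^sup>2) / 4)) * ennreal (normal_density 0 (sqrt 2) x) \<partial>lborel)"
    unfolding gauss_def by (subst emeasure_density) (auto intro: nn_integral_mono)
  also have "\<dots> = ennreal (sqrt 2 * exp (- (r\<^sup>2) / 4))"
    by (subst nn_integral_cmult) (auto simp: nn_integral_eq_integral)
  finally show ?thesis
    by (simp add: gauss.emeasure_eq_measure ennreal_le_iff)
qed

lemma measure_gauss_interval_ge:
  assumes "0 \<le> a" "a \<le> b"
  shows "(b - a) * (exp (- (b\<^sup>2) / 2) / 3) \<le> measure gauss {a..b}"
proof -
  have "ennreal (exp (- (b\<^sup>2) / 2) / 3) * indicator {a..b} x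
          \<le> ennreal (std_normal_density x) * indicator {a..b} x" for x
  proof (cases "x \<in> {a..b}")
    case True
    then have "exp (- (b\<^sup>2) / 2) \<le> exp (- (x\<^sup>2) / 2)"
      using assms by (simp add: power_mono)
    moreover have "sqrt (2 * pi) \<le> 3"
      using pi_less_4 by (intro real_le_lsqrt) auto
    ultimately have "exp (- (b\<^sup>2) / 2) / 3 \<le> exp (- (x\<^sup>2) / 2) / sqrt (2 * pi)"
      by (intro frac_le) auto
    then show ?thesis
      using True by (simp add: std_normal_density_def ennreal_leI)
  qed simp
  then have "(\<integral>\<^sup>+x. ennreal (exp (- (b\<^sup>2) / 2) / 3) * indicator {a..b} x \<partial>lborel)
      \<le> emeasure gauss {a..b}"
    unfolding gauss_def by (subst emeasure_density) (auto intro: nn_integral_mono)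
  moreover have "(\<integral>\<^sup>+x. ennreal (exp (- (b\<^sup>2) / 2) / 3) * indicator {a..b} x \<partial>lborel)
      = ennreal ((b - a) * (exp (- (b\<^sup>2) / 2) / 3))"
    using assms by (subst nn_integral_cmult_indicator) (auto simp: ennreal_mult'[symmetric] mult.commute)
  ultimately have "ennreal ((b - a) * (exp (- (b\<^sup>2) / 2) / 3)) \<le> emeasure gauss {a..b}"
    by simp
  then show ?thesis
    by (simp add: gauss.emeasure_eq_measure ennreal_le_iff)
qed

section \<open>Real polynomials\<close>

lemma sum_abs_coeff_le_synthetic_div:
  fixes q :: "real poly"
  assumes "degree q \<le> Suc d" "0 \<le> c"
  shows "(\<Sum>m\<le>Suc d. \<bar>coeff q m\<bar>)
    \<le> \<bar>poly q c\<bar> + (1 + c) * (\<Sum>m\<le>d. \<bar>coeff (synthetic_div q c) m\<bar>)"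
proof -
  define r where "r = synthetic_div q c"
  have q_eq: "q + smult c r = pCons (poly q c) r"
    unfolding r_def by (rule synthetic_div_correct)
  have coeff_q_0: "coeff q 0 = poly q c - c * coeff r 0"
    using arg_cong[OF q_eq, of "\<lambda>p. coeff p 0"] by simp
  have coeff_q_Suc: "coeff q (Suc m) = coeff r m - c * coeff r (Suc m)" for m
    using arg_cong[OF q_eq, of "\<lambda>p. coeff p (Suc m)"] by simp
  have "degree r \<le> d"
    using assms(1) by (simp add: r_def degree_synthetic_div)
  then have sum_shift: "\<bar>coeff r 0\<bar> + (\<Sum>m\<le>d. \<bar>coeff r (Suc m)\<bar>) = (\<Sum>m\<le>d. \<bar>coeff r m\<bar>)"
    using sum.atMost_Suc_shift[of "\<lambda>m. \<bar>coeff r m\<bar>" d] by (simp add: coeff_eq_0)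
  have "(\<Sum>m\<le>Suc d. \<bar>coeff q m\<bar>) = \<bar>coeff q 0\<bar> + (\<Sum>m\<le>d. \<bar>coeff q (Suc m)\<bar>)"
    by (rule sum.atMost_Suc_shift)
  also have "\<dots> \<le> (\<bar>poly q c\<bar> + c * \<bar>coeff r 0\<bar>) + (\<Sum>m\<le>d. \<bar>coeff r m\<bar> + c * \<bar>coeff r (Suc m)\<bar>)"
    unfolding coeff_q_0 coeff_q_Suc using assms(2)
    by (intro add_mono sum_mono) (auto simp: abs_mult intro: order_trans[OF abs_triangle_ineq4])
  also have "\<dots> = \<bar>poly q c\<bar> + (\<Sum>m\<le>d. \<bar>coeff r m\<bar>)
      + c * (\<bar>coeff r 0\<bar> + (\<Sum>m\<le>d. \<bar>coeff r (Suc m)\<bar>))"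
    by (simp add: sum.distrib sum_distrib_left algebra_simps)
  also have "\<dots> = \<bar>poly q c\<bar> + (1 + c) * (\<Sum>m\<le>d. \<bar>coeff r m\<bar>)"
    unfolding sum_shift by (simp add: algebra_simps)
  finally show ?thesis
    unfolding r_def .
qed

lemma sum_abs_coeff_le_if_bounded_at_nodes:
  fixes q :: "real poly"
  assumes "degree q \<le> d" "0 \<le> c" "\<And>j. j \<le> d \<Longrightarrow> \<bar>poly q (c + real j)\<bar> \<le> M"
  shows "(\<Sum>m\<le>d. \<bar>coeff q m\<bar>) \<le> (4 + 2 * c + 2 * real d) ^ d * M"
  using assms
proof (induction d arbitrary: q c M)
  case 0
  then have "\<bar>poly q c\<bar> \<le> M"
    by (metis add_0_right of_nat_0 order_refl)
  moreover have "poly q c = coeff q 0"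
    using 0 by (simp add: poly_altdef)
  ultimately show ?case by simp
next
  case (Suc d)
  define r where "r = synthetic_div q c"
  have M0: "\<bar>poly q c\<bar> \<le> M"
    using Suc.prems(3)[of 0] by simp
  have quotient: "(x - c) * poly r x = poly q x - poly q c" for x
    using arg_cong[OF synthetic_div_correct'[of c q], of "\<lambda>p. poly p x"] unfolding r_def
    by (simp add: algebra_simps)
  \<comment> \<open>The quotient is bounded by \<open>2M\<close> at the shifted nodes \<open>c + 1 + j\<close>, where \<open>x - c \<ge> 1\<close>.\<close>
  have "\<bar>poly r (c + 1 + real j)\<bar> \<le> 2 * M" if "j \<le> d" for j
  proof -
    have "\<bar>poly r (c + 1 + real j)\<bar> \<le> \<bar>(c + 1 + real j - c) * poly r (c + 1 + real j)\<bar>"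
      by (simp add: abs_mult mult_le_cancel_right1)
    also have "\<dots> = \<bar>poly q (c + real (Suc j)) - poly q c\<bar>"
      unfolding quotient by (simp add: add_ac)
    also have "\<dots> \<le> 2 * M"
      using Suc.prems(3)[of "Suc j"] M0 that by linarith
    finally show ?thesis .
  qed
  then have "(\<Sum>m\<le>d. \<bar>coeff r m\<bar>) \<le> (6 + 2 * c + 2 * real d) ^ d * (2 * M)"
    using Suc.IH[of r "c + 1" "2 * M"] Suc.prems(1,2)
    by (simp add: r_def degree_synthetic_div add_ac)
  then have "(1 + c) * (\<Sum>m\<le>d. \<bar>coeff r m\<bar>) \<le> (1 + c) * ((6 + 2 * c + 2 * real d) ^ d * (2 * M))"
    using Suc.prems(2) by (intro mult_left_mono) auto
  then have "(\<Sum>m\<le>Suc d. \<bar>coeff q m\<bar>) \<le> M + (1 + c) * ((6 + 2 * c + 2 * real d) ^ d * (2 * M))"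
    using sum_abs_coeff_le_synthetic_div[OF Suc.prems(1,2)] M0 unfolding r_def by linarith
  also have "\<dots> \<le> (4 + 2 * c + 2 * real (Suc d)) ^ Suc d * M"
  proof -
    let ?X = "6 + 2 * c + 2 * real d"
    have "0 \<le> M" "1 \<le> ?X ^ d"
      using M0 Suc.prems(2) by (auto intro: one_le_power)
    then have "M + (1 + c) * (?X ^ d * (2 * M)) \<le> (3 + 2 * c) * (?X ^ d * M)"
      by (simp add: algebra_simps mult_le_cancel_left1)
    also have "\<dots> \<le> ?X * (?X ^ d * M)"
      using Suc.prems(2) \<open>0 \<le> M\<close> by (intro mult_right_mono) auto
    finally show ?thesis by (simp add: algebra_simps)
  qed
  finally show ?case .
qed

lemma abs_poly_le_sum_abs_coeff:
  fixes p :: "real poly"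
  assumes "degree p \<le> D" "\<bar>x\<bar> \<le> r"
  shows "\<bar>poly p x\<bar> \<le> (\<Sum>i\<le>D. \<bar>coeff p i\<bar> * r ^ i)"
proof -
  have "poly p x = (\<Sum>i\<le>D. coeff p i * x ^ i)"
    unfolding poly_altdef using assms(1)
    by (intro sum.mono_neutral_left) (auto simp: coeff_eq_0)
  also have "\<bar>\<dots>\<bar> \<le> (\<Sum>i\<le>D. \<bar>coeff p i\<bar> * r ^ i)"
    by (rule order_trans[OF sum_abs sum_mono])
       (auto simp: abs_mult power_abs intro!: mult_left_mono power_mono assms(2))
  finally show ?thesis .
qed

lemma deriv_funpow_poly: "(deriv ^^ k) (poly p) = poly ((pderiv ^^ k) p)"
  for p :: "real poly"
proof (induction k)
  case (Suc k)
  have "deriv (poly q) = poly (pderiv q)" for q :: "real poly"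
    by (rule ext) (rule DERIV_imp_deriv[OF poly_DERIV])
  then show ?case using Suc.IH by simp
qed simp

lemma higher_pderiv_diff_const:
  "1 \<le> k \<Longrightarrow> (pderiv ^^ k) (p - [:c:]) = (pderiv ^^ k) p"
  by (rule poly_eqI) (simp add: coeff_higher_pderiv coeff_pCons split: nat.split)

section \<open>Centred polynomials of bounded degree\<close>

definition mean_pderiv :: "real poly \<Rightarrow> nat \<Rightarrow> real" where
  "mean_pderiv p k = (\<integral>x. poly ((pderiv ^^ k) p) x \<partial>gauss)"

context
  fixes d :: nat
  assumes d_pos: "1 \<le> d"
begin

definition moment_bound :: real where
  "moment_bound = 1 + (\<Sum>n\<le>d. \<Sum>k\<le>d. \<bar>pochhammer (real (Suc n)) k * gauss_moment n\<bar>)"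

lemma one_le_moment_bound: "1 \<le> moment_bound"
  unfolding moment_bound_def by (simp add: sum_nonneg)

lemma pochhammer_moment_le_moment_bound:
  assumes "n \<le> d" "k \<le> d"
  shows "\<bar>pochhammer (real (Suc n)) k * gauss_moment n\<bar> \<le> moment_bound"
proof -
  let ?a = "\<lambda>n k. \<bar>pochhammer (real (Suc n)) k * gauss_moment n\<bar>"
  have "?a n k \<le> (\<Sum>k\<le>d. ?a n k)"
    using assms by (intro member_le_sum) auto
  also have "\<dots> \<le> (\<Sum>n\<le>d. \<Sum>k\<le>d. ?a n k)"
    using assms by (intro member_le_sum[where f = "\<lambda>n. \<Sum>k\<le>d. ?a n k"]) (auto intro: sum_nonneg)
  finally show ?thesis
    unfolding moment_bound_def by simp
qed

definition profile_ratio :: real where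
  "profile_ratio = moment_bound * d * (d + 1)"

definition node_spacing :: real where
  "node_spacing = 4 * profile_ratio * (4 + 2 * d) ^ d"

definition node_range :: real where
  "node_range = d * node_spacing + 1"

definition interval_length :: real where
  "interval_length = min 1 (moment_bound / node_range ^ d)"

definition poly_bound_factor :: real where
  "poly_bound_factor = (moment_bound + 1) * d * (1 + moment_bound * d) ^ d"

lemma one_le_node_spacing: "1 \<le> node_spacing"
proof -
  have "1 \<le> 4 * (moment_bound * d * (d + 1)) * (4 + 2 * real d) ^ d"
    using d_pos one_le_moment_bound by (intro mult_ge1_I one_le_power) auto
  then show ?thesis
    unfolding node_spacing_def profile_ratio_def by simp
qed

lemma one_le_profile_ratio: "1 \<le> profile_ratio"
  unfolding profile_ratio_def using d_pos one_le_moment_bound by (intro mult_ge1_I) auto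

lemma one_le_node_range: "1 \<le> node_range"
  unfolding node_range_def using one_le_node_spacing by simp

lemma interval_length_pos: "0 < interval_length"
  unfolding interval_length_def using one_le_moment_bound one_le_node_range by simp

lemma interval_length_le_1: "interval_length \<le> 1"
  unfolding interval_length_def by simp

lemma interval_length_mult_le: "interval_length * node_range ^ d \<le> moment_bound"
proof -
  have "interval_length \<le> moment_bound / node_range ^ d"
    unfolding interval_length_def by simp
  then show ?thesis
    using one_le_node_range by (simp add: le_divide_eq)
qed

lemma poly_bound_factor_nonneg: "0 \<le> poly_bound_factor"
  unfolding poly_bound_factor_def using one_le_moment_bound by simp

(* With L = 2 * poly_bound_factor * d + 1, the term 4 L^2 serves the upper bound (trivial for
   s < L, the Gaussian tail at s / L otherwise); the last term absorbs the lower bound. *)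
definition tail_const :: real where
  "tail_const = 3 + 4 * (2 * poly_bound_factor * d + 1)\<^sup>2 + node_range\<^sup>2 / 2
     + 3 * exp (node_range\<^sup>2 / 2) / interval_length"

lemma tail_const_ge:
  "3 \<le> tail_const" "4 * (2 * poly_bound_factor * d + 1)\<^sup>2 \<le> tail_const"
  "node_range\<^sup>2 / 2 \<le> tail_const" "3 * exp (node_range\<^sup>2 / 2) / interval_length \<le> tail_const"
  unfolding tail_const_def using interval_length_pos by auto

lemma tail_const_pos: "0 < tail_const"
  using tail_const_ge(1) by linarith

context
  fixes Q :: "real poly"
  assumes degree_Q: "degree Q \<le> d"
    and integral_Q: "(\<integral>w. poly Q w \<partial>gauss) = 0"
begin

abbreviation deriv_profile :: "real \<Rightarrow> real" where
  "deriv_profile s \<equiv> \<Sum>k\<in>{1..d}. \<bar>mean_pderiv Q k\<bar> * s ^ k"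

abbreviation coeff_profile :: "real \<Rightarrow> real" where
  "coeff_profile s \<equiv> \<Sum>m\<in>{1..d}. \<bar>coeff Q m\<bar> * s ^ m"

lemma coeff_vanishes_above: "d < m \<Longrightarrow> coeff Q m = 0"
  using degree_Q by (simp add: coeff_eq_0)

lemma atMost_eq_insert_0: "{..d} = insert 0 {1..d}"
  by auto

lemma mean_pderiv_eq:
  "mean_pderiv Q k
     = (\<Sum>n\<le>d. pochhammer (real (Suc n)) k * gauss_moment n * coeff Q (n + k))"
proof -
  have "degree ((pderiv ^^ k) Q) \<le> d"
    using degree_Q by (simp add: degree_higher_pderiv)
  from integral_gauss_poly[OF this] show ?thesis
    unfolding mean_pderiv_def coeff_higher_pderiv
    by (simp add: algebra_simps)
qed

lemma mean_pderiv_eq_fact: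
  "mean_pderiv Q k = fact k * coeff Q k
     + (\<Sum>n\<in>{1..d}. pochhammer (real (Suc n)) k * gauss_moment n * coeff Q (n + k))"
  unfolding mean_pderiv_eq atMost_eq_insert_0 by (simp add: pochhammer_fact)

lemma coeff_0_eq: "coeff Q 0 = - (\<Sum>n\<in>{1..d}. coeff Q n * gauss_moment n)"
  using integral_gauss_poly[OF degree_Q] integral_Q
  unfolding atMost_eq_insert_0 by simp

lemma coeff_profile_nonneg: "0 \<le> s \<Longrightarrow> 0 \<le> coeff_profile s"
  by (intro sum_nonneg) auto

lemma deriv_profile_nonneg: "0 \<le> s \<Longrightarrow> 0 \<le> deriv_profile s"
  by (intro sum_nonneg) auto

lemma abs_coeff_le_coeff_profile:
  assumes "1 \<le> m" "0 \<le> s"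
  shows "\<bar>coeff Q m\<bar> * s ^ m \<le> coeff_profile s"
proof (cases "m \<le> d")
  case True
  then show ?thesis
    using assms by (intro member_le_sum) auto
qed (use assms coeff_vanishes_above coeff_profile_nonneg in auto)

lemma abs_coeff_le_deriv_profile_step:
  assumes s: "1 \<le> s" and k: "1 \<le> k" "k \<le> d" and B: "0 \<le> B"
    and higher: "\<And>m. k < m \<Longrightarrow> m \<le> d \<Longrightarrow> \<bar>coeff Q m\<bar> * s ^ m \<le> B"
  shows "\<bar>coeff Q k\<bar> * s ^ k \<le> deriv_profile s + moment_bound * d * B"
proof -
  let ?a = "\<lambda>n. pochhammer (real (Suc n)) k * gauss_moment n"
  have "\<bar>coeff Q k\<bar> * s ^ k \<le> fact k * \<bar>coeff Q k\<bar> * s ^ k"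
    using s mult_right_mono[of 1 "fact k" "\<bar>coeff Q k\<bar> * s ^ k"] by (simp add: mult.assoc)
  also have "fact k * \<bar>coeff Q k\<bar> = \<bar>mean_pderiv Q k - (\<Sum>n\<in>{1..d}. ?a n * coeff Q (n + k))\<bar>"
    unfolding mean_pderiv_eq_fact by (simp add: abs_mult)
  also have "\<dots> * s ^ k \<le> (\<bar>mean_pderiv Q k\<bar> + (\<Sum>n\<in>{1..d}. \<bar>?a n * coeff Q (n + k)\<bar>)) * s ^ k"
    using s by (intro mult_right_mono order_trans[OF abs_triangle_ineq4] add_left_mono sum_abs) auto
  also have "\<dots> = \<bar>mean_pderiv Q k\<bar> * s ^ k + (\<Sum>n\<in>{1..d}. \<bar>?a n\<bar> * (\<bar>coeff Q (n + k)\<bar> * s ^ k))"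
    by (simp add: distrib_right sum_distrib_right abs_mult mult.assoc)
  also have "\<dots> \<le> deriv_profile s + (\<Sum>n\<in>{1..d}. moment_bound * B)"
  proof (intro add_mono sum_mono)
    show "\<bar>mean_pderiv Q k\<bar> * s ^ k \<le> deriv_profile s"
      using s k by (intro member_le_sum) auto
    fix n assume n: "n \<in> {1..d}"
    have "\<bar>coeff Q (n + k)\<bar> * s ^ k \<le> \<bar>coeff Q (n + k)\<bar> * s ^ (n + k)"
      using s by (intro mult_left_mono power_increasing) auto
    also have "\<dots> \<le> B"
      using higher[of "n + k"] coeff_vanishes_above[of "n + k"] n B by (cases "n + k \<le> d") auto
    finally show "\<bar>?a n\<bar> * (\<bar>coeff Q (n + k)\<bar> * s ^ k) \<le> moment_bound * B"
      using n k B s pochhammer_moment_le_moment_bound[of n k] by (intro mult_mono) auto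
  qed
  finally show ?thesis
    by (simp add: algebra_simps)
qed

lemma abs_coeff_le_deriv_profile:
  assumes s: "1 \<le> s"
  shows "1 \<le> k \<Longrightarrow> \<bar>coeff Q k\<bar> * s ^ k \<le> (1 + moment_bound * d) ^ (d - k) * deriv_profile s"
proof (induction "d - k" arbitrary: k rule: less_induct)
  case less
  let ?V = "deriv_profile s" and ?G = "moment_bound"
  have V_nonneg: "0 \<le> ?V"
    using s by (intro deriv_profile_nonneg) auto
  consider "d < k" | "k = d" | "k < d"
    by linarith
  then show ?case
  proof cases
    case 1
    then show ?thesis
      using coeff_vanishes_above V_nonneg by simp
  next
    case 2
    then show ?thesis
      using abs_coeff_le_deriv_profile_step[OF s less.prems, where B = 0] by simp
  next
    case 3
    define X where "X = (1 + ?G * d) ^ (d - Suc k)"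
    have X: "1 \<le> X" "(1 + ?G * d) * X = (1 + ?G * d) ^ (d - k)"
      unfolding X_def using one_le_moment_bound 3
      by (auto intro: one_le_power simp flip: power_Suc simp: Suc_diff_Suc)
    have "\<bar>coeff Q m\<bar> * s ^ m \<le> X * ?V" if "k < m" "m \<le> d" for m
    proof -
      have "\<bar>coeff Q m\<bar> * s ^ m \<le> (1 + ?G * d) ^ (d - m) * ?V"
        using less.hyps[of m] that less.prems by auto
      also have "\<dots> \<le> X * ?V"
        unfolding X_def using one_le_moment_bound that V_nonneg
        by (intro mult_right_mono power_increasing) auto
      finally show ?thesis .
    qed
    then have "\<bar>coeff Q k\<bar> * s ^ k \<le> ?V + ?G * d * (X * ?V)"
      using abs_coeff_le_deriv_profile_step[OF s less.prems] 3 X V_nonneg by simp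
    also have "\<dots> \<le> (1 + ?G * d) * X * ?V"
      using mult_right_mono[OF X(1) V_nonneg] by (simp add: algebra_simps)
    finally show ?thesis
      unfolding X .
  qed
qed

lemma coeff_profile_le_deriv_profile:
  assumes s: "1 \<le> s"
  shows "coeff_profile s \<le> d * (1 + moment_bound * d) ^ d * deriv_profile s"
proof -
  have "\<bar>coeff Q m\<bar> * s ^ m \<le> (1 + moment_bound * d) ^ d * deriv_profile s" if "m \<in> {1..d}" for m
  proof -
    have "\<bar>coeff Q m\<bar> * s ^ m \<le> (1 + moment_bound * d) ^ (d - m) * deriv_profile s"
      using abs_coeff_le_deriv_profile[OF s] that by simp
    also have "\<dots> \<le> (1 + moment_bound * d) ^ d * deriv_profile s"
      using one_le_moment_bound deriv_profile_nonneg[of s] s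
      by (intro mult_right_mono power_increasing) auto
    finally show ?thesis .
  qed
  then have "coeff_profile s \<le> (\<Sum>m\<in>{1..d}. (1 + moment_bound * d) ^ d * deriv_profile s)"
    by (rule sum_mono)
  then show ?thesis
    by simp
qed

lemma deriv_profile_le_coeff_profile:
  assumes s: "1 \<le> s"
  shows "deriv_profile s \<le> profile_ratio * coeff_profile s"
proof -
  have "\<bar>mean_pderiv Q k\<bar> * s ^ k \<le> (d + 1) * (moment_bound * coeff_profile s)"
    if k: "k \<in> {1..d}" for k
  proof -
    have "\<bar>mean_pderiv Q k\<bar> * s ^ k
        \<le> (\<Sum>n\<le>d. \<bar>pochhammer (real (Suc n)) k * gauss_moment n * coeff Q (n + k)\<bar>) * s ^ k"
      unfolding mean_pderiv_eq using s by (intro mult_right_mono sum_abs) auto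
    also have "\<dots> = (\<Sum>n\<le>d. \<bar>pochhammer (real (Suc n)) k * gauss_moment n\<bar>
                            * (\<bar>coeff Q (n + k)\<bar> * s ^ k))"
      by (simp add: sum_distrib_right abs_mult mult.assoc)
    also have "\<dots> \<le> (\<Sum>n\<le>d. moment_bound * coeff_profile s)"
    proof (intro sum_mono)
      fix n assume n: "n \<in> {..d}"
      have "\<bar>coeff Q (n + k)\<bar> * s ^ k \<le> \<bar>coeff Q (n + k)\<bar> * s ^ (n + k)"
        using s by (intro mult_left_mono power_increasing) auto
      also have "\<dots> \<le> coeff_profile s"
        using k s by (intro abs_coeff_le_coeff_profile) auto
      finally show "\<bar>pochhammer (real (Suc n)) k * gauss_moment n\<bar> * (\<bar>coeff Q (n + k)\<bar> * s ^ k)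
          \<le> moment_bound * coeff_profile s"
        using pochhammer_moment_le_moment_bound[of n k] n k s by (intro mult_mono) auto
    qed
    finally show ?thesis
      by simp
  qed
  then have "deriv_profile s \<le> (\<Sum>k\<in>{1..d}. (d + 1) * (moment_bound * coeff_profile s))"
    by (rule sum_mono)
  then show ?thesis
    by (simp add: profile_ratio_def algebra_simps)
qed

lemma abs_coeff_0_le:
  assumes s: "1 \<le> s"
  shows "\<bar>coeff Q 0\<bar> \<le> moment_bound * coeff_profile s"
proof -
  have "\<bar>coeff Q 0\<bar> \<le> (\<Sum>n\<in>{1..d}. \<bar>coeff Q n\<bar> * \<bar>gauss_moment n\<bar>)"
    unfolding coeff_0_eq by (simp add: abs_mult order_trans[OF sum_abs])
  also have "\<dots> \<le> (\<Sum>n\<in>{1..d}. moment_bound * (\<bar>coeff Q n\<bar> * s ^ n))"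
  proof (intro sum_mono)
    fix n assume n: "n \<in> {1..d}"
    have "\<bar>gauss_moment n\<bar> \<le> moment_bound * 1"
      using pochhammer_moment_le_moment_bound[of n 0] n by simp
    also have "\<dots> \<le> moment_bound * s ^ n"
      using s one_le_moment_bound by (intro mult_left_mono one_le_power) auto
    finally have "\<bar>gauss_moment n\<bar> \<le> moment_bound * s ^ n" .
    from mult_left_mono[OF this, of "\<bar>coeff Q n\<bar>"]
    show "\<bar>coeff Q n\<bar> * \<bar>gauss_moment n\<bar> \<le> moment_bound * (\<bar>coeff Q n\<bar> * s ^ n)"
      by (simp add: mult.left_commute)
  qed
  finally show ?thesis
    by (simp add: sum_distrib_left)
qed

lemma abs_poly_le_deriv_profile:
  assumes s: "1 \<le> s" and w: "\<bar>w\<bar> \<le> s"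
  shows "\<bar>poly Q w\<bar> \<le> poly_bound_factor * deriv_profile s"
proof -
  have "\<bar>poly Q w\<bar> \<le> (\<Sum>m\<le>d. \<bar>coeff Q m\<bar> * s ^ m)"
    by (rule abs_poly_le_sum_abs_coeff[OF degree_Q w])
  also have "\<dots> = \<bar>coeff Q 0\<bar> + coeff_profile s"
    unfolding atMost_eq_insert_0 by simp
  also have "\<dots> \<le> (moment_bound + 1) * coeff_profile s"
    using abs_coeff_0_le[OF s] by (simp add: algebra_simps)
  also have "\<dots> \<le> (moment_bound + 1) * (d * (1 + moment_bound * d) ^ d * deriv_profile s)"
    using coeff_profile_le_deriv_profile[OF s] one_le_moment_bound by (intro mult_left_mono) auto
  finally show ?thesis
    by (simp add: poly_bound_factor_def algebra_simps)
qed

lemma abs_poly_pderiv_le: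
  assumes s: "1 \<le> s" and L: "1 \<le> L" and x: "\<bar>x\<bar> \<le> L * s"
  shows "\<bar>poly (pderiv Q) x\<bar> \<le> (real d + 1) * (real d * L ^ d * coeff_profile s)"
proof -
  have "degree (pderiv Q) \<le> d"
    using degree_Q degree_pderiv[of Q] by linarith
  then have "\<bar>poly (pderiv Q) x\<bar> \<le> (\<Sum>i\<le>d. \<bar>coeff (pderiv Q) i\<bar> * (L * s) ^ i)"
    using x by (rule abs_poly_le_sum_abs_coeff)
  also have "\<dots> \<le> (\<Sum>i\<le>d. real d * L ^ d * coeff_profile s)"
  proof (intro sum_mono)
    fix i assume i: "i \<in> {..d}"
    show "\<bar>coeff (pderiv Q) i\<bar> * (L * s) ^ i \<le> real d * L ^ d * coeff_profile s"
    proof (cases "Suc i \<le> d")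
      case True
      have "\<bar>coeff (pderiv Q) i\<bar> * (L * s) ^ i = real (Suc i) * (L ^ i * (\<bar>coeff Q (Suc i)\<bar> * s ^ i))"
        by (simp add: coeff_pderiv abs_mult power_mult_distrib)
      also have "\<dots> \<le> real d * (L ^ d * (\<bar>coeff Q (Suc i)\<bar> * s ^ Suc i))"
      proof -
        have "L ^ i \<le> L ^ d" "s ^ i \<le> s ^ Suc i"
          using True L s by (auto intro: power_increasing)
        then show ?thesis
          using True L s by (intro mult_mono mult_left_mono) auto
      qed
      also have "\<dots> \<le> real d * (L ^ d * coeff_profile s)"
        using L s by (intro mult_left_mono abs_coeff_le_coeff_profile) auto
      finally show ?thesis
        by simp
    qed (use coeff_vanishes_above[of "Suc i"] coeff_profile_nonneg[of s] s L in \<open>auto simp: coeff_pderiv\<close>)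
  qed
  finally show ?thesis
    by (simp add: add.commute)
qed

lemma measure_abs_poly_ge_le_gauss_tail:
  assumes s: "1 \<le> s" and t: "poly_bound_factor * deriv_profile s < t"
  shows "measure gauss {w. t \<le> \<bar>poly Q w\<bar>} \<le> sqrt 2 * exp (- (s\<^sup>2) / 4)"
proof -
  have "{w. t \<le> \<bar>poly Q w\<bar>} \<subseteq> {w. s < \<bar>w\<bar>}"
    using abs_poly_le_deriv_profile[OF s] t by (force simp: not_less[symmetric])
  then have "measure gauss {w. t \<le> \<bar>poly Q w\<bar>} \<le> measure gauss {w. s < \<bar>w\<bar>}"
    by (intro gauss.finite_measure_mono) auto
  also have "\<dots> \<le> sqrt 2 * exp (- (s\<^sup>2) / 4)"
    using s by (intro measure_gauss_abs_gt_le) auto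
  finally show ?thesis .
qed

lemma node_spacing_mult_coeff_profile_le:
  assumes s: "1 \<le> s"
  shows "node_spacing * coeff_profile s
    \<le> (\<Sum>m\<le>d. \<bar>coeff (pcompose Q [:0, node_spacing * s:]) m\<bar>)"
proof -
  define \<rho> where "\<rho> = node_spacing * s"
  have \<rho>: "1 \<le> \<rho>"
    unfolding \<rho>_def using one_le_node_spacing s by (intro mult_ge1_I)
  have "node_spacing * coeff_profile s \<le> (\<Sum>m\<in>{1..d}. \<bar>coeff Q m\<bar> * \<rho> ^ m)"
    unfolding sum_distrib_left
  proof (intro sum_mono)
    fix m assume m: "m \<in> {1..d}"
    have "node_spacing \<le> node_spacing ^ m"
      using one_le_node_spacing m by (metis atLeastAtMost_iff power_increasing power_one_right)
    then have "node_spacing * (\<bar>coeff Q m\<bar> * s ^ m) \<le> node_spacing ^ m * (\<bar>coeff Q m\<bar> * s ^ m)"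
      using s by (intro mult_right_mono) auto
    then show "node_spacing * (\<bar>coeff Q m\<bar> * s ^ m) \<le> \<bar>coeff Q m\<bar> * \<rho> ^ m"
      by (simp add: \<rho>_def power_mult_distrib algebra_simps)
  qed
  also have "\<dots> \<le> (\<Sum>m\<le>d. \<bar>coeff Q m\<bar> * \<rho> ^ m)"
    using \<rho> by (intro sum_mono2) auto
  also have "\<dots> = (\<Sum>m\<le>d. \<bar>coeff (pcompose Q [:0, \<rho>:]) m\<bar>)"
    unfolding coeff_pcompose_linear using \<rho> by (simp add: abs_mult mult.commute)
  finally show ?thesis
    unfolding \<rho>_def .
qed

lemma exists_node_abs_poly_ge:
  assumes s: "1 \<le> s" and S_pos: "0 < coeff_profile s"
  obtains j where "j \<le> d" "2 * profile_ratio * coeff_profile s \<le> \<bar>poly Q (node_spacing * s * real j)\<bar>"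
proof -
  have "\<exists>j\<le>d. 2 * profile_ratio * coeff_profile s \<le> \<bar>poly Q (node_spacing * s * real j)\<bar>"
  proof (rule ccontr)
    assume "\<not> ?thesis"
    then have small: "\<bar>poly Q (node_spacing * s * real j)\<bar> \<le> 2 * profile_ratio * coeff_profile s"
      if "j \<le> d" for j
      using that by (meson not_le less_imp_le)
    define q where "q = pcompose Q [:0, node_spacing * s:]"
    have "degree q \<le> d"
      unfolding q_def using degree_pcompose_le[of Q "[:0, node_spacing * s:]"] degree_Q
      by (auto split: if_splits)
    moreover have "\<bar>poly q (0 + real j)\<bar> \<le> 2 * profile_ratio * coeff_profile s" if "j \<le> d" for j
      using small[OF that] by (simp add: q_def poly_pcompose mult.commute)
    ultimately have "(\<Sum>m\<le>d. \<bar>coeff q m\<bar>) \<le> (4 + 2 * real d) ^ d * (2 * profile_ratio * coeff_profile s)"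
      using sum_abs_coeff_le_if_bounded_at_nodes[of q d 0] by simp
    with node_spacing_mult_coeff_profile_le[OF s]
    have "node_spacing * coeff_profile s \<le> node_spacing / 2 * coeff_profile s"
      by (simp add: q_def node_spacing_def algebra_simps)
    then show False
      using S_pos one_le_node_spacing by (simp add: mult_le_cancel_right)
  qed
  then show ?thesis
    using that by blast
qed

lemma abs_poly_ge_near_node:
  assumes s: "1 \<le> s" and w0: "0 \<le> w0" "w0 + 1 \<le> node_range * s"
    and large: "2 * profile_ratio * coeff_profile s \<le> \<bar>poly Q w0\<bar>"
    and w: "w0 \<le> w" "w \<le> w0 + interval_length"
  shows "profile_ratio * coeff_profile s \<le> \<bar>poly Q w\<bar>"
proof -
  have S_nonneg: "0 \<le> coeff_profile s"
    using s by (intro coeff_profile_nonneg) auto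
  have "\<bar>poly Q w - poly Q w0\<bar> \<le> interval_length * ((real d + 1) * (real d * node_range ^ d * coeff_profile s))"
  proof (cases "w = w0")
    case False
    then have "w0 < w"
      using w by auto
    then obtain x where x: "w0 < x" "x < w" "poly Q w - poly Q w0 = (w - w0) * poly (pderiv Q) x"
      using poly_MVT by blast
    then have "\<bar>x\<bar> \<le> node_range * s"
      using w w0 interval_length_le_1 by auto
    then have "\<bar>poly (pderiv Q) x\<bar> \<le> (real d + 1) * (real d * node_range ^ d * coeff_profile s)"
      using abs_poly_pderiv_le[OF s one_le_node_range] by blast
    then show ?thesis
      using x w by (auto simp: abs_mult intro!: mult_mono)
  qed (use S_nonneg interval_length_pos one_le_node_range in \<open>auto intro!: mult_nonneg_nonneg\<close>)
  also have "\<dots> = (real d + 1) * real d * (interval_length * node_range ^ d) * coeff_profile s"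
    by (simp add: algebra_simps)
  also have "\<dots> \<le> (real d + 1) * real d * moment_bound * coeff_profile s"
    using interval_length_mult_le S_nonneg by (intro mult_right_mono mult_left_mono) auto
  also have "\<dots> = profile_ratio * coeff_profile s"
    by (simp add: profile_ratio_def algebra_simps)
  finally show ?thesis
    using large by linarith
qed

lemma measure_abs_poly_ge_ge_interval:
  assumes s: "1 \<le> s" and t: "0 < t" "t \<le> deriv_profile s"
  shows "interval_length * (exp (- (node_range * s)\<^sup>2 / 2) / 3) \<le> measure gauss {w. t \<le> \<bar>poly Q w\<bar>}"
proof -
  have t_le: "t \<le> profile_ratio * coeff_profile s"
    using deriv_profile_le_coeff_profile[OF s] t by linarith
  then have "0 < profile_ratio * coeff_profile s"
    using t by linarith
  then have "0 < coeff_profile s"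
    using one_le_profile_ratio by (simp add: zero_less_mult_iff)
  then obtain j where j: "j \<le> d" "2 * profile_ratio * coeff_profile s \<le> \<bar>poly Q (node_spacing * s * real j)\<bar>"
    using exists_node_abs_poly_ge[OF s] by blast
  define w0 where "w0 = node_spacing * s * real j"
  have w0: "0 \<le> w0" "w0 + 1 \<le> node_range * s"
  proof -
    show "0 \<le> w0"
      unfolding w0_def using one_le_node_spacing s by simp
    have "w0 \<le> node_spacing * s * d"
      unfolding w0_def using j one_le_node_spacing s by (intro mult_left_mono) auto
    then show "w0 + 1 \<le> node_range * s"
      using s by (simp add: node_range_def algebra_simps)
  qed
  have "{w0..w0 + interval_length} \<subseteq> {w. t \<le> \<bar>poly Q w\<bar>}"
    using abs_poly_ge_near_node[OF s w0] j t_le unfolding w0_def by force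
  moreover have "{w. t \<le> \<bar>poly Q w\<bar>} \<in> sets gauss"
  proof -
    have [measurable]: "poly Q \<in> borel_measurable borel"
      by (intro borel_measurable_continuous_onI continuous_intros)
    show ?thesis
      by simp
  qed
  ultimately have "measure gauss {w0..w0 + interval_length} \<le> measure gauss {w. t \<le> \<bar>poly Q w\<bar>}"
    by (rule gauss.finite_measure_mono)
  moreover have "interval_length * (exp (- (node_range * s)\<^sup>2 / 2) / 3)
      \<le> interval_length * (exp (- (w0 + interval_length)\<^sup>2 / 2) / 3)"
    using w0 interval_length_pos interval_length_le_1 by (intro mult_left_mono) (auto intro: power_mono)
  moreover have "\<dots> \<le> measure gauss {w0..w0 + interval_length}"
    using measure_gauss_interval_ge[of w0 "w0 + interval_length"] w0 interval_length_pos by simp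
  ultimately show ?thesis
    by linarith
qed

lemma deriv_profile_divide_le:
  assumes "0 \<le> s" "1 \<le> L"
  shows "deriv_profile (s / L) \<le> deriv_profile s / L"
  unfolding sum_divide_distrib
proof (intro sum_mono)
  fix k assume k: "k \<in> {1..d}"
  have "L \<le> L ^ k"
    using assms k by (metis atLeastAtMost_iff power_increasing power_one_right)
  then have "s ^ k / L ^ k \<le> s ^ k / L"
    using assms by (intro divide_left_mono) auto
  then show "\<bar>mean_pderiv Q k\<bar> * (s / L) ^ k \<le> \<bar>mean_pderiv Q k\<bar> * s ^ k / L"
    by (simp add: power_divide mult_left_mono flip: times_divide_eq_right)
qed

lemma poly_bound_factor_mult_deriv_profile_less:
  assumes t: "0 < t" and s: "0 \<le> s"
    and le_t: "\<And>k. k \<in> {1..d} \<Longrightarrow> \<bar>mean_pderiv Q k\<bar> * s ^ k \<le> t"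
  shows "poly_bound_factor * deriv_profile (s / (2 * poly_bound_factor * d + 1)) < t"
proof -
  define L where "L = 2 * poly_bound_factor * d + 1"
  have L: "1 \<le> L"
    unfolding L_def using poly_bound_factor_nonneg by simp
  have "deriv_profile s \<le> (\<Sum>k\<in>{1..d}. t)"
    using le_t by (rule sum_mono)
  then have "deriv_profile s / L \<le> d * t / L"
    using L by (intro divide_right_mono) auto
  then have "poly_bound_factor * deriv_profile (s / L) \<le> poly_bound_factor * (d * t / L)"
    using deriv_profile_divide_le[OF s L] poly_bound_factor_nonneg
    by (intro mult_left_mono) auto
  also have "\<dots> < t"
  proof -
    have "0 \<le> poly_bound_factor * d * t"
      using t poly_bound_factor_nonneg by simp
    then have "poly_bound_factor * d * t < L * t"
      using t by (simp add: L_def algebra_simps)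
    then show ?thesis
      using L by (simp add: field_simps)
  qed
  finally show ?thesis
    unfolding L_def .
qed

lemma measure_abs_poly_ge_upper:
  assumes t: "0 < t" and s: "0 \<le> s"
    and le_t: "\<And>k. k \<in> {1..d} \<Longrightarrow> \<bar>mean_pderiv Q k\<bar> * s ^ k \<le> t"
  shows "measure gauss {w. t \<le> \<bar>poly Q w\<bar>} \<le> tail_const * exp (- (1 / tail_const) * s\<^sup>2)"
proof -
  define L where "L = 2 * poly_bound_factor * d + 1"
  have L: "1 \<le> L"
    unfolding L_def using poly_bound_factor_nonneg by simp
  note C = tail_const_ge[folded L_def] tail_const_pos
  show ?thesis
  proof (cases "s < L")
    case True
    then have "s\<^sup>2 \<le> L\<^sup>2"
      using s by (intro power_mono) auto
    then have "4 * s\<^sup>2 \<le> tail_const"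
      using C(2) by linarith
    then have "(1 / tail_const) * s\<^sup>2 \<le> 1 / 4"
      using C(5) by (simp add: field_simps)
    then have "3 / 4 \<le> exp (- (1 / tail_const) * s\<^sup>2)"
      using exp_ge_add_one_self[of "- (1 / tail_const) * s\<^sup>2"] by simp
    then have "3 * (3 / 4) \<le> tail_const * exp (- (1 / tail_const) * s\<^sup>2)"
      using C(1) by (intro mult_mono) auto
    then have "1 \<le> tail_const * exp (- (1 / tail_const) * s\<^sup>2)"
      by linarith
    then show ?thesis
      using gauss.prob_le_1 by (rule order_trans[rotated])
  next
    case False
    then have s_L: "1 \<le> s / L"
      using L by simp
    have "poly_bound_factor * deriv_profile (s / L) < t"
      unfolding L_def using t s le_t by (rule poly_bound_factor_mult_deriv_profile_less)
    then have "measure gauss {w. t \<le> \<bar>poly Q w\<bar>} \<le> sqrt 2 * exp (- (s / L)\<^sup>2 / 4)"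
      by (rule measure_abs_poly_ge_le_gauss_tail[OF s_L])
    also have "\<dots> \<le> tail_const * exp (- (1 / tail_const) * s\<^sup>2)"
    proof (intro mult_mono)
      show "sqrt 2 \<le> tail_const"
        using C(1) sqrt2_less_2 by linarith
      have "s\<^sup>2 / tail_const \<le> s\<^sup>2 / (4 * L\<^sup>2)"
        using C(2) C(5) L by (intro divide_left_mono) auto
      then show "exp (- (s / L)\<^sup>2 / 4) \<le> exp (- (1 / tail_const) * s\<^sup>2)"
        by (simp add: power_divide)
    qed (use C(5) in auto)
    finally show ?thesis .
  qed
qed

lemma measure_abs_poly_ge_lower:
  assumes t: "0 < t" and s: "0 \<le> s" and pk: "1 \<le> p" "p \<le> k" "k \<le> d"
    and t_le: "t \<le> \<bar>mean_pderiv Q k\<bar> * s ^ p"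
  shows "1 / tail_const * exp (- tail_const * s\<^sup>2) \<le> measure gauss {w. t \<le> \<bar>poly Q w\<bar>}"
proof -
  define s1 where "s1 = max s 1"
  define A where "A = node_range\<^sup>2 / 2"
  note C = tail_const_ge[folded A_def] tail_const_pos
  have s1: "1 \<le> s1" "s \<le> s1" "s1\<^sup>2 \<le> 1 + s\<^sup>2"
    unfolding s1_def using s by (auto simp: max_def)
  have "s ^ p \<le> s1 ^ p" "s1 ^ p \<le> s1 ^ k"
    using s s1 pk by (auto intro: power_mono power_increasing)
  then have "t \<le> \<bar>mean_pderiv Q k\<bar> * s1 ^ k"
    using t_le mult_left_mono[of "s ^ p" "s1 ^ k" "\<bar>mean_pderiv Q k\<bar>"] by simp
  also have "\<dots> \<le> deriv_profile s1"
    using pk s1 by (intro member_le_sum) auto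
  finally have lower: "interval_length * (exp (- (node_range * s1)\<^sup>2 / 2) / 3)
      \<le> measure gauss {w. t \<le> \<bar>poly Q w\<bar>}"
    using measure_abs_poly_ge_ge_interval[OF s1(1) t] by blast
  have "1 / tail_const \<le> interval_length * exp (- A) / 3"
    using C(4) C(5) interval_length_pos by (simp add: exp_minus field_simps)
  moreover have "exp (- tail_const * s\<^sup>2) \<le> exp (- A * s\<^sup>2)"
    using C(3) by (simp add: mult_right_mono)
  ultimately have "1 / tail_const * exp (- tail_const * s\<^sup>2) \<le> interval_length * exp (- A) / 3 * exp (- A * s\<^sup>2)"
    using C(5) interval_length_pos by (intro mult_mono) auto
  also have "\<dots> = interval_length * (exp (- A - A * s\<^sup>2) / 3)"
    by (simp add: exp_diff exp_minus field_simps)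
  also have "\<dots> \<le> interval_length * (exp (- (node_range * s1)\<^sup>2 / 2) / 3)"
  proof -
    have "(node_range * s1)\<^sup>2 \<le> node_range\<^sup>2 * (1 + s\<^sup>2)"
      using mult_left_mono[OF s1(3), of "node_range\<^sup>2"] by (simp add: power_mult_distrib)
    then show ?thesis
      using interval_length_pos by (simp add: A_def algebra_simps)
  qed
  finally show ?thesis
    using lower by linarith
qed

lemma measure_abs_poly_ge_eq_0:
  assumes t: "0 < t" and zero: "\<And>k. k \<in> {1..d} \<Longrightarrow> mean_pderiv Q k = 0"
  shows "measure gauss {w. t \<le> \<bar>poly Q w\<bar>} = 0"
proof -
  have "\<bar>poly Q w\<bar> < t" for w
    using abs_poly_le_deriv_profile[of "max 1 \<bar>w\<bar>" w] zero t by simp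
  then show ?thesis
    by (simp add: not_le[symmetric])
qed

end

end

section \<open>The square of \<open>f\<close>\<close>

definition fsq_poly :: "nat \<Rightarrow> (nat \<Rightarrow> real) \<Rightarrow> real poly" where
  "fsq_poly T a = (\<Sum>t=0..T. monom (a (T - t)) t)\<^sup>2"

lemma poly_fsq_poly: "poly (fsq_poly T a) = fsq T a"
  by (auto simp: fsq_def fpol_def fsq_poly_def poly_sum poly_monom)

lemma degree_fsq_poly: "degree (fsq_poly T a) \<le> 2 * T"
proof -
  have "degree (\<Sum>t=0..T. monom (a (T - t)) t) \<le> T"
    by (intro degree_sum_le) (auto intro: order_trans[OF degree_monom_le])
  then show ?thesis
    unfolding fsq_poly_def by (metis degree_power_le mult.commute mult_le_mono2 order_trans)
qed

lemma Ederiv_eq_mean_pderiv: "Ederiv T a k = mean_pderiv (fsq_poly T a) k"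
  unfolding Ederiv_def mean_pderiv_def poly_fsq_poly[symmetric] deriv_funpow_poly ..

definition centred_fsq_poly :: "nat \<Rightarrow> (nat \<Rightarrow> real) \<Rightarrow> real poly" where
  "centred_fsq_poly T a = fsq_poly T a - [:\<integral>w. fsq T a w \<partial>gauss:]"

lemma poly_centred_fsq_poly:
  "poly (centred_fsq_poly T a) w = fsq T a w - (\<integral>w. fsq T a w \<partial>gauss)"
  by (simp add: centred_fsq_poly_def poly_fsq_poly)

lemma degree_centred_fsq_poly: "degree (centred_fsq_poly T a) \<le> 2 * T"
  unfolding centred_fsq_poly_def using degree_fsq_poly by (intro degree_diff_le) auto

lemma integral_centred_fsq_poly: "(\<integral>w. poly (centred_fsq_poly T a) w \<partial>gauss) = 0"
  unfolding poly_centred_fsq_poly using integrable_gauss_poly[of "fsq_poly T a"]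
  by (simp add: poly_fsq_poly gauss.prob_space)

lemma mean_pderiv_centred_fsq_poly:
  "1 \<le> k \<Longrightarrow> mean_pderiv (centred_fsq_poly T a) k = Ederiv T a k"
  by (simp add: centred_fsq_poly_def Ederiv_eq_mean_pderiv mean_pderiv_def higher_pderiv_diff_const)

lemma power_sqrt_powr_inverse:
  assumes "0 < x" "1 \<le> p"
  shows "sqrt (x powr (2 / real p)) ^ p = x"
proof -
  have "sqrt (x powr (2 / real p)) ^ p = ((x powr (2 / real p)) powr (1 / 2)) powr real p"
    using assms by (simp add: powr_half_sqrt powr_realpow)
  also have "\<dots> = x"
    using assms by (simp add: powr_powr)
  finally show ?thesis .
qed

lemma power_sqrt_le_if_le_powr:
  assumes "0 < x" "1 \<le> p" "0 \<le> e" "e \<le> x powr (2 / real p)"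
  shows "sqrt e ^ p \<le> x"
proof -
  have "sqrt e ^ p \<le> sqrt (x powr (2 / real p)) ^ p"
    using assms by (intro power_mono) auto
  then show ?thesis
    using power_sqrt_powr_inverse[OF assms(1,2)] by simp
qed

definition eta_index :: "nat \<Rightarrow> (nat \<times> nat) set" where
  "eta_index T = {(p, k). 1 \<le> p \<and> p \<le> k \<and> k \<le> 2 * T}"

definition eta_term :: "nat \<Rightarrow> (nat \<Rightarrow> real) \<Rightarrow> real \<Rightarrow> nat \<times> nat \<Rightarrow> ereal" where
  "eta_term T a t = (\<lambda>(p, k). if Ederiv T a k = 0 then \<infinity>
     else ereal ((t / \<bar>Ederiv T a k\<bar>) powr (2 / real p)))"

lemma eta_eq_Min: "eta T a t = Min (eta_term T a t ` eta_index T)"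
  unfolding eta_def eta_term_def eta_index_def ..

lemma finite_eta_index: "finite (eta_index T)"
  by (rule finite_subset[of _ "{..2 * T} \<times> {..2 * T}"]) (auto simp: eta_index_def)

lemma eta_le_eta_term: "pk \<in> eta_index T \<Longrightarrow> eta T a t \<le> eta_term T a t pk"
  unfolding eta_eq_Min using finite_eta_index by simp

lemma eta_in_eta_terms:
  assumes "1 \<le> T"
  shows "eta T a t \<in> eta_term T a t ` eta_index T"
proof -
  have "(1, 1) \<in> eta_index T"
    using assms by (simp add: eta_index_def)
  then show ?thesis
    unfolding eta_eq_Min using finite_eta_index by (intro Min_in) auto
qed

lemma eta_cases [consumes 2]:
  assumes T: "1 \<le> T" and t: "0 < t"
  obtains (infinite) "eta T a t = \<infinity>" "\<And>j. j \<in> {1..2 * T} \<Longrightarrow> Ederiv T a j = 0"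
  | (finite) s p k where "0 \<le> s" "eta T a t = ereal (s\<^sup>2)"
      "\<And>j. j \<in> {1..2 * T} \<Longrightarrow> \<bar>Ederiv T a j\<bar> * s ^ j \<le> t"
      "1 \<le> p" "p \<le> k" "k \<le> 2 * T" "\<bar>Ederiv T a k\<bar> * s ^ p = t"
proof -
  let ?c = "Ederiv T a" and ?F = "eta_term T a t"
  obtain p k where pk: "(p, k) \<in> eta_index T" "eta T a t = ?F (p, k)"
    using eta_in_eta_terms[OF T, of a t] by (force simp: image_iff)
  show ?thesis
  proof (cases "\<forall>j\<in>{1..2 * T}. ?c j = 0")
    case True
    then show ?thesis
      using infinite pk by (auto simp: eta_term_def eta_index_def)
  next
    case False
    then obtain j where j: "j \<in> {1..2 * T}" "?c j \<noteq> 0"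
      by blast
    then have "eta T a t \<le> ?F (1, j)"
      by (intro eta_le_eta_term) (auto simp: eta_index_def)
    then have c_k: "?c k \<noteq> 0"
      using j pk by (auto simp: eta_term_def)
    define e where "e = (t / \<bar>?c k\<bar>) powr (2 / real p)"
    have p: "1 \<le> p" "p \<le> k" "k \<le> 2 * T"
      using pk(1) by (auto simp: eta_index_def)
    have e: "0 \<le> e" "eta T a t = ereal e"
      using pk c_k by (auto simp: e_def eta_term_def)
    have "\<bar>?c i\<bar> * sqrt e ^ i \<le> t" if "i \<in> {1..2 * T}" for i
    proof (cases "?c i = 0")
      case False
      have "eta T a t \<le> ?F (i, i)"
        using that by (intro eta_le_eta_term) (auto simp: eta_index_def)
      then have "e \<le> (t / \<bar>?c i\<bar>) powr (2 / real i)"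
        using False e by (simp add: eta_term_def)
      then have "sqrt e ^ i \<le> t / \<bar>?c i\<bar>"
        using that t False e(1) by (intro power_sqrt_le_if_le_powr) auto
      then show ?thesis
        using False by (simp add: field_simps)
    qed (use t in simp)
    moreover have "\<bar>?c k\<bar> * sqrt e ^ p = t"
      using p t c_k power_sqrt_powr_inverse[of "t / \<bar>?c k\<bar>" p] by (simp add: e_def)
    ultimately show ?thesis
      using finite[of "sqrt e"] e p by simp
  qed
qed

lemma tail_bounds_centred_fsq_poly:
  fixes a :: "nat \<Rightarrow> real"
  assumes T: "1 \<le> T" and t: "0 < t"
  defines "C \<equiv> tail_const (2 * T)"
    and "P \<equiv> measure gauss {w. t \<le> \<bar>poly (centred_fsq_poly T a) w\<bar>}"
  shows "1 / C * exp_neg C (eta T a t) \<le> P \<and> P \<le> C * exp_neg (1 / C) (eta T a t)"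
proof -
  have d: "1 \<le> 2 * T"
    using T by simp
  note Q = degree_centred_fsq_poly[of T a] integral_centred_fsq_poly[of T a]
  show ?thesis
    using T t
  proof (cases rule: eta_cases[where a = a])
    case infinite
    then show ?thesis
      using measure_abs_poly_ge_eq_0[OF d Q t] mean_pderiv_centred_fsq_poly
      by (simp add: P_def exp_neg_def)
  next
    case (finite s p k)
    then show ?thesis
      using measure_abs_poly_ge_lower[OF d Q t finite(1,4-6)]
        measure_abs_poly_ge_upper[OF d Q t finite(1)] mean_pderiv_centred_fsq_poly
      by (simp add: C_def P_def exp_neg_def)
  qed
qed

theorem mainTheorem17:
  fixes T :: nat
  assumes "T \<ge> 1"
  shows "\<exists>C>0. \<forall>(a :: nat \<Rightarrow> real) (t :: real). t > 0 \<longrightarrow>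
     (let P = measure gauss {w. \<bar>fsq T a w - integral\<^sup>L gauss (fsq T a)\<bar> \<ge> t}
      in (1 / C) * exp_neg C (eta T a t) \<le> P \<and> P \<le> C * exp_neg (1 / C) (eta T a t))"
proof (intro exI[of _ "tail_const (2 * T)"] conjI allI impI)
  show "0 < tail_const (2 * T)"
    using assms by (intro tail_const_pos) simp
  fix a :: "nat \<Rightarrow> real" and t :: real
  assume "0 < t"
  from tail_bounds_centred_fsq_poly[OF assms this, of a]
  show "let P = measure gauss {w. \<bar>fsq T a w - integral\<^sup>L gauss (fsq T a)\<bar> \<ge> t}
    in 1 / tail_const (2 * T) * exp_neg (tail_const (2 * T)) (eta T a t) \<le> P
       \<and> P \<le> tail_const (2 * T) * exp_neg (1 / tail_const (2 * T)) (eta T a t)"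
    by (simp add: poly_centred_fsq_poly)
qed

end
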